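(* Let $P$ be a convex Euclidean polygon all of whose interior angles are obtuse or right, and let $l_0$ be the length of its shortest side. Let $\alpha,\beta$ be two distinct diagonals of $P$ which intersect in their interiors. Then $l(\alpha)\,l(\beta)\ge 2l_0^2$, with equality if and only if $l(\alpha)=l(\beta)=\sqrt2\,l_0$.
   Context: A diagonal of $P$ is a segment joining two non-adjacent vertices of $P$. *)

theory Defs
  imports "HOL-Analysis.Analysis"
begin

text \<open>The Euclidean plane is modelled by the complex numbers. A polygon with n vertices
  is a map v :: nat => complex, vertex i (for i < n) being v i; vertex indices are taken mod n.\<close>

definition cross2 :: "complex \<Rightarrow> complex \<Rightarrow> real" where
  "cross2 a b = Im (cnj a * b)"

definition nxt :: "nat \<Rightarrow> nat \<Rightarrow> nat" where
  "nxt n i = Suc i mod n"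

definition prv :: "nat \<Rightarrow> nat \<Rightarrow> nat" where
  "prv n i = (i + n - 1) mod n"

definition convex_polygon :: "nat \<Rightarrow> (nat \<Rightarrow> complex) \<Rightarrow> bool" where
  "convex_polygon n v \<longleftrightarrow> n \<ge> 3 \<and>
     (\<exists>s::real. (s = 1 \<or> s = -1) \<and>
        (\<forall>i<n. \<forall>j<n. j \<noteq> i \<and> j \<noteq> nxt n i \<longrightarrow>
            s * cross2 (v (nxt n i) - v i) (v j - v i) > 0))"

definition vec_angle :: "complex \<Rightarrow> complex \<Rightarrow> real" where
  "vec_angle a b = arccos ((a \<bullet> b) / (norm a * norm b))"

definition interior_angle :: "nat \<Rightarrow> (nat \<Rightarrow> complex) \<Rightarrow> nat \<Rightarrow> real" where
  "interior_angle n v i = vec_angle (v (prv n i) - v i) (v (nxt n i) - v i)"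

definition shortest_side :: "nat \<Rightarrow> (nat \<Rightarrow> complex) \<Rightarrow> real" where
  "shortest_side n v = Min ((\<lambda>i. dist (v i) (v (nxt n i))) ` {..<n})"

definition is_diagonal :: "nat \<Rightarrow> nat \<Rightarrow> nat \<Rightarrow> bool" where
  "is_diagonal n i j \<longleftrightarrow> i < n \<and> j < n \<and> i \<noteq> j \<and> j \<noteq> nxt n i \<and> i \<noteq> nxt n j"

end

theory Submission
  imports Defs
begin

text \<open>Let \<open>[U 0, U d]\<close> be the shorter of the two diagonals; if it has length at least
  \<open>sqrt 2 * l\<close> there is nothing to prove. Otherwise let \<open>[U c, U a]\<close> cross it. The product of
  the lengths is at least \<open>cross2 (U c - U a) (U d - U 0)\<close>, the sum of the doubled areas of the
  triangles \<open>U 0, U c, U d\<close> and \<open>U d, U a, U 0\<close>, and each of these is at least \<open>l\<^sup>2\<close>.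

  Over the chain \<open>U 1, \<dots>, U (d - 1)\<close> the height above the diagonal is smallest at an end, since
  on a convex polygon a local minimum of a linear functional is global. The doubled area of
  \<open>U 0, U 1, U d\<close> is \<open>cmod (U 1 - U 0)\<close> times the distance of \<open>U d\<close> from the line of the first
  edge, and that distance is at least \<open>l\<close>: a chain this short cannot consist of pairwise
  non-obtuse edges, so two consecutive edges lie on opposite sides of the normal of the first edge,
  and together they rise by at least \<open>l\<close>. Equality in both triangles would produce a hexagon with
  two pairs of antiparallel sides, which cannot turn consistently.\<close>

lemma cross2_Re_Im: "cross2 a b = Re a * Im b - Im a * Re b"
  by (simp add: cross2_def)

lemma cross2_inner_sq_sum: "(inner u x)\<^sup>2 + (cross2 u x)\<^sup>2 = (cmod u)\<^sup>2 * (cmod x)\<^sup>2"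
  unfolding cmod_power2 by (simp add: cross2_Re_Im inner_complex_def power2_eq_square algebra_simps)

lemma norm_sq_mult_inner: "(cmod u)\<^sup>2 * inner x y = inner u x * inner u y + cross2 u x * cross2 u y"
  unfolding cmod_power2 by (simp add: cross2_Re_Im inner_complex_def power2_eq_square algebra_simps)

lemma norm_sq_mult_cross2: "(cmod u)\<^sup>2 * cross2 x y = inner u x * cross2 u y - cross2 u x * inner u y"
  unfolding cmod_power2 by (simp add: cross2_Re_Im inner_complex_def power2_eq_square algebra_simps)

lemma cross2_pluecker: "cross2 e c * cross2 a d = cross2 e a * cross2 c d + cross2 e d * cross2 a c"
  by (simp add: cross2_Re_Im algebra_simps)

lemma cross2_cone_inner: "cross2 c a * inner w x = cross2 c x * inner w a + cross2 x a * inner w c"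
  by (simp add: cross2_Re_Im inner_complex_def algebra_simps)

lemma cross2_minus_right [simp]: "cross2 u (- x) = - cross2 u x"
  by (simp add: cross2_def)

lemma cross2_sum_right: "cross2 u (sum f S) = (\<Sum>k\<in>S. cross2 u (f k))"
  by (simp add: cross2_def sum_distrib_left)

lemma abs_cross2_le: "\<bar>cross2 x y\<bar> \<le> cmod x * cmod y"
proof -
  have "(cross2 x y)\<^sup>2 \<le> (cmod x * cmod y)\<^sup>2"
    using cross2_inner_sq_sum[of x y] by (simp add: power_mult_distrib) (smt (verit) zero_le_power2)
  then show ?thesis
    using abs_le_square_iff by (metis abs_mult abs_norm_cancel)
qed

lemma cross2_pos_trans:
  assumes "0 < cross2 e a" "0 < cross2 e c" "0 < cross2 e d" "0 < cross2 a c" "0 < cross2 c d"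
  shows "0 < cross2 a d"
proof -
  have "0 < cross2 e a * cross2 c d + cross2 e d * cross2 a c"
    using assms by (intro add_pos_pos mult_pos_pos)
  then have "0 < cross2 e c * cross2 a d"
    using cross2_pluecker[of e c a d] by simp
  then show ?thesis
    using assms(2) by (simp add: zero_less_mult_iff)
qed

definition antiparallel :: "complex \<Rightarrow> complex \<Rightarrow> bool" where
  "antiparallel a b \<longleftrightarrow> cross2 a b = 0 \<and> inner a b < 0"

lemma antiparallel_commute: "antiparallel a b \<longleftrightarrow> antiparallel b a"
  by (auto simp: antiparallel_def cross2_Re_Im inner_commute mult.commute)

lemma antiparallel_neg_cnj: "antiparallel (- cnj a) (- cnj b) \<longleftrightarrow> antiparallel a b"
  by (auto simp: antiparallel_def cross2_Re_Im inner_complex_def)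

lemma antiparallel_left_turn:
  assumes "antiparallel a b" "0 < cross2 b c"
  shows "cross2 a c < 0"
proof -
  have "a \<noteq> 0"
    using assms(1) by (auto simp: antiparallel_def)
  then have "0 < (cmod a)\<^sup>2 * cross2 b c"
    using assms(2) by simp
  also have "\<dots> = inner a b * cross2 a c"
    using assms(1) norm_sq_mult_cross2[of a b c] by (simp add: antiparallel_def)
  finally show ?thesis
    using assms(1) by (simp add: antiparallel_def zero_less_mult_iff)
qed

lemma norm_sum_sq_ge_sum_norm_sq:
  fixes f :: "'a \<Rightarrow> 'b::real_inner"
  assumes "finite S" "\<And>i j. i \<in> S \<Longrightarrow> j \<in> S \<Longrightarrow> 0 \<le> inner (f i) (f j)"
  shows "(\<Sum>i\<in>S. (norm (f i))\<^sup>2) \<le> (norm (sum f S))\<^sup>2"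
  using assms
proof (induction S rule: finite_induct)
  case (insert x F)
  have "(norm (sum f (insert x F)))\<^sup>2 = (norm (f x))\<^sup>2 + 2 * inner (f x) (sum f F) + (norm (sum f F))\<^sup>2"
    using insert.hyps by (simp add: power2_norm_eq_inner inner_add_left inner_add_right inner_commute)
  moreover have "0 \<le> inner (f x) (sum f F)"
    unfolding inner_sum_right using insert.prems by (intro sum_nonneg) auto
  ultimately show ?case
    using insert by simp
qed simp

lemma straddle_normal_bound:
  fixes N X Y cx zx cy zy :: real
  assumes N: "0 < N" and ex: "cx\<^sup>2 + zx\<^sup>2 = N * X\<^sup>2" and ey: "cy\<^sup>2 + zy\<^sup>2 = N * Y\<^sup>2"
    and c: "cx * cy \<le> 0" and d: "0 \<le> cx * cy + zx * zy"
  shows "N * X\<^sup>2 * Y\<^sup>2 \<le> X\<^sup>2 * zy\<^sup>2 + Y\<^sup>2 * zx\<^sup>2"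
proof -
  have "\<bar>cx * cy\<bar> \<le> zx * zy"
    using c d by linarith
  then have "cx\<^sup>2 * cy\<^sup>2 \<le> zx\<^sup>2 * zy\<^sup>2"
    by (metis abs_ge_zero power_mono power_mult_distrib power2_abs)
  then have "(N * X\<^sup>2 - zx\<^sup>2) * (N * Y\<^sup>2 - zy\<^sup>2) \<le> zx\<^sup>2 * zy\<^sup>2"
    using ex ey by (simp flip: eq_diff_eq)
  then have "N * (N * X\<^sup>2 * Y\<^sup>2) \<le> N * (X\<^sup>2 * zy\<^sup>2 + Y\<^sup>2 * zx\<^sup>2)"
    by (simp add: algebra_simps)
  then show ?thesis
    using N by simp
qed

lemma straddle_sum_ge:
  fixes N X Y l cx zx cy zy :: real
  assumes N: "0 < N" and l: "0 < l" "l \<le> X" "l \<le> Y"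
    and ex: "cx\<^sup>2 + zx\<^sup>2 = N * X\<^sup>2" and ey: "cy\<^sup>2 + zy\<^sup>2 = N * Y\<^sup>2"
    and c: "cx * cy \<le> 0" and z: "0 \<le> zx" "0 \<le> zy" and d: "0 \<le> cx * cy + zx * zy"
  shows "l * sqrt N \<le> zx + zy \<and> (zx + zy = l * sqrt N \<longrightarrow> (zx = 0 \<and> cy = 0) \<or> (zy = 0 \<and> cx = 0))"
proof -
  define A B P Q where "A = zx\<^sup>2" and "B = zy\<^sup>2" and "P = X\<^sup>2" and "Q = Y\<^sup>2"
  have NPQ: "N * P * Q \<le> P * B + Q * A"
    using straddle_normal_bound[OF N ex ey c d] by (simp add: A_def B_def P_def Q_def)
  have P: "l\<^sup>2 \<le> P" "l\<^sup>2 \<le> Q" "0 < P" "0 < Q"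
    using l by (simp_all add: P_def Q_def power_mono)
  have "P * Q * (l\<^sup>2 * N) \<le> l\<^sup>2 * (P * B + Q * A)"
    using mult_left_mono[OF NPQ, of "l\<^sup>2"] by (simp add: algebra_simps)
  also have "\<dots> \<le> P * Q * (A + B)"
  proof -
    have "l\<^sup>2 * (Q * A) \<le> P * (Q * A)" "l\<^sup>2 * (P * B) \<le> Q * (P * B)"
      using P by (auto intro!: mult_right_mono simp: A_def B_def)
    then show ?thesis
      by (simp add: algebra_simps)
  qed
  finally have AB: "l\<^sup>2 * N \<le> A + B"
    using P by (simp add: mult_le_cancel_left_pos zero_less_mult_iff)
  have sq: "(l * sqrt N)\<^sup>2 = l\<^sup>2 * N"
    using N by (simp add: power_mult_distrib)
  have "(l * sqrt N)\<^sup>2 \<le> (zx + zy)\<^sup>2"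
    using AB z unfolding sq power2_sum A_def B_def by (simp add: add_increasing2)
  then have "l * sqrt N \<le> zx + zy"
    by (rule power2_le_imp_le) (use z in simp)
  moreover have "(zx = 0 \<and> cy = 0) \<or> (zy = 0 \<and> cx = 0)" if e: "zx + zy = l * sqrt N"
  proof -
    have "(zx + zy)\<^sup>2 \<le> zx\<^sup>2 + zy\<^sup>2"
      using AB e sq by (simp add: A_def B_def)
    then have "zx * zy \<le> 0"
      by (simp add: power2_sum)
    then have "zx = 0 \<or> zy = 0"
      using z by (simp add: mult_le_0_iff) linarith
    then show ?thesis
    proof
      assume "zx = 0"
      then have "N * Q \<le> B"
        using NPQ P by (simp add: A_def)
      then have "cy\<^sup>2 \<le> 0"
        using ey unfolding Q_def B_def by linarith
      then show ?thesis
        using \<open>zx = 0\<close> by simp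
    next
      assume "zy = 0"
      then have "N * P \<le> A"
        using NPQ P by (simp add: B_def)
      then have "cx\<^sup>2 \<le> 0"
        using ex unfolding P_def A_def by linarith
      then show ?thesis
        using \<open>zy = 0\<close> by simp
    qed
  qed
  ultimately show ?thesis
    by blast
qed

text \<open>Two vectors at most a right angle apart whose components along \<open>u\<close> have opposite signs
  straddle the normal of \<open>u\<close>, so together they rise at least \<open>l\<close> above the line of \<open>u\<close>.\<close>

lemma straddle_cross2_sum_ge:
  assumes u: "u \<noteq> 0" and l: "0 < l" "l \<le> cmod x" "l \<le> cmod y"
    and xy: "0 \<le> inner x y" and opp: "inner u x * inner u y \<le> 0"
    and nonneg: "0 \<le> cross2 u x" "0 \<le> cross2 u y"
  shows "l * cmod u \<le> cross2 u x + cross2 u y \<and>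
    (cross2 u x + cross2 u y = l * cmod u \<longrightarrow>
      (cross2 u x = 0 \<and> inner u y = 0) \<or> (cross2 u y = 0 \<and> inner u x = 0))"
proof -
  have "0 \<le> (cmod u)\<^sup>2 * inner x y"
    using xy by simp
  then have "0 \<le> inner u x * inner u y + cross2 u x * cross2 u y"
    by (simp add: norm_sq_mult_inner)
  from straddle_sum_ge[OF _ l cross2_inner_sq_sum cross2_inner_sq_sum opp nonneg this] u
  show ?thesis
    by simp
qed

lemma chain_cross2_sum_ge:
  fixes F :: "nat \<Rightarrow> complex"
  assumes u: "u \<noteq> 0" and l: "0 < l"
    and F: "\<And>j. j \<in> {a..<b} \<Longrightarrow> l \<le> cmod (F j) \<and> 0 \<le> cross2 u (F j)"
    and k: "a \<le> k" "Suc k < b"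
    and straddle: "0 \<le> inner (F k) (F (Suc k))" "inner u (F k) * inner u (F (Suc k)) \<le> 0"
  shows "l * cmod u \<le> (\<Sum>j=a..<b. cross2 u (F j)) \<and>
    ((\<Sum>j=a..<b. cross2 u (F j)) = l * cmod u \<longrightarrow>
      (\<forall>j\<in>{a..<b} - {k, Suc k}. cross2 u (F j) = 0) \<and>
      ((cross2 u (F k) = 0 \<and> inner u (F (Suc k)) = 0) \<or>
       (cross2 u (F (Suc k)) = 0 \<and> inner u (F k) = 0)))"
proof -
  define R where "R = {a..<b} - {k, Suc k}"
  have "{k, Suc k} \<subseteq> {a..<b}"
    using k by auto
  then have split: "(\<Sum>j=a..<b. cross2 u (F j)) = (\<Sum>j\<in>R. cross2 u (F j)) + (cross2 u (F k) + cross2 u (F (Suc k)))"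
    unfolding R_def using sum.subset_diff[of "{k, Suc k}" "{a..<b}"] by simp
  have R_nonneg: "\<forall>j\<in>R. 0 \<le> cross2 u (F j)"
    using F by (simp add: R_def)
  have Fk: "l \<le> cmod (F k)" "0 \<le> cross2 u (F k)" "l \<le> cmod (F (Suc k))" "0 \<le> cross2 u (F (Suc k))"
    using F k by auto
  note pair = straddle_cross2_sum_ge[OF u l Fk(1) Fk(3) straddle Fk(2) Fk(4)]
  have R_sum: "0 \<le> (\<Sum>j\<in>R. cross2 u (F j))"
    using R_nonneg by (simp add: sum_nonneg)
  show ?thesis
  proof (intro conjI impI)
    show "l * cmod u \<le> (\<Sum>j=a..<b. cross2 u (F j))"
      using pair R_sum unfolding split by linarith
  next
    assume "(\<Sum>j=a..<b. cross2 u (F j)) = l * cmod u"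
    then have "(\<Sum>j\<in>R. cross2 u (F j)) = 0" "cross2 u (F k) + cross2 u (F (Suc k)) = l * cmod u"
      using pair R_sum unfolding split by linarith+
    then show "\<forall>j\<in>{a..<b} - {k, Suc k}. cross2 u (F j) = 0"
      "(cross2 u (F k) = 0 \<and> inner u (F (Suc k)) = 0) \<or> (cross2 u (F (Suc k)) = 0 \<and> inner u (F k) = 0)"
      using pair R_nonneg sum_nonneg_eq_0_iff[of R "\<lambda>j. cross2 u (F j)"] unfolding R_def by auto
  qed
qed

lemma convex_comb_eq_zero_signs:
  fixes s x y :: real
  assumes "0 < s" "s < 1" "(1 - s) * x + s * y = 0" "x \<noteq> 0 \<or> y \<noteq> 0"
  shows "x \<noteq> 0 \<and> y \<noteq> 0 \<and> (x < 0 \<longleftrightarrow> 0 < y)"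
proof -
  have "0 < (1 - s) * x + s * y" if "0 \<le> x" "0 \<le> y" "x \<noteq> 0 \<or> y \<noteq> 0"
    using that assms(1,2) by (auto intro: add_pos_nonneg add_nonneg_pos)
  moreover have "(1 - s) * x + s * y < 0" if "x \<le> 0" "y \<le> 0" "x \<noteq> 0 \<or> y \<noteq> 0"
    using that assms(1,2) by (auto intro: add_neg_nonpos add_nonpos_neg simp: mult_pos_neg mult_nonneg_nonpos)
  ultimately show ?thesis
    using assms(3,4) by (smt (verit))
qed

lemma mult_ge_sq_of_strict:
  fixes p q t :: real
  assumes "0 \<le> p" "0 \<le> q" "0 < t" "p < t \<Longrightarrow> t\<^sup>2 < p * q" "q < t \<Longrightarrow> t\<^sup>2 < p * q"
  shows "t\<^sup>2 \<le> p * q \<and> (p * q = t\<^sup>2 \<longleftrightarrow> p = t \<and> q = t)"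
proof (cases "p < t \<or> q < t")
  case True
  then show ?thesis
    using assms by auto
next
  case False
  then have "t \<le> p" "t \<le> q"
    by auto
  have strict: "t * t < p * q" if "t < p \<or> t < q"
    using that \<open>t \<le> p\<close> \<open>t \<le> q\<close> assms(3)
    by (auto intro: mult_less_le_imp_less mult_le_less_imp_less)
  have "t * t \<le> p * q"
    using \<open>t \<le> p\<close> \<open>t \<le> q\<close> assms(3) by (intro mult_mono) auto
  moreover have "p * q = t * t \<Longrightarrow> p = t \<and> q = t"
    using strict \<open>t \<le> p\<close> \<open>t \<le> q\<close> by fastforce
  ultimately show ?thesis
    by (auto simp: power2_eq_square)
qed

text \<open>A convex polygon with non-acute angles, normalised to counterclockwise orientation and
  indexed periodically by all naturals; \<open>l\<close> is a lower bound for the side lengths.\<close>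

locale obtuse_polygon =
  fixes n :: nat and U :: "nat \<Rightarrow> complex" and l :: real
  assumes three_le: "3 \<le> n" and l_pos: "0 < l"
    and periodic: "U (k + n) = U k"
    and inj_on_period: "i < j \<Longrightarrow> j < i + n \<Longrightarrow> U i \<noteq> U j"
    and left_of_edge: "U j \<noteq> U i \<Longrightarrow> U j \<noteq> U (Suc i) \<Longrightarrow> 0 < cross2 (U (Suc i) - U i) (U j - U i)"
    and side_length_ge: "l \<le> cmod (U (Suc i) - U i)"
    and angle_nonacute: "inner (U i - U (Suc i)) (U (Suc (Suc i)) - U (Suc i)) \<le> 0"
begin

lemma periodic_mult: "U (k + m * n) = U k"
proof (induction m)
  case (Suc m)
  then show ?case
    using periodic[of "k + m * n"] by (simp add: algebra_simps)
qed simp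

lemma vertex_mod: "U (k mod n) = U k"
  using periodic_mult[of "k mod n" "k div n"] by simp

lemma vertex_eq_iff: "U x = U y \<longleftrightarrow> x mod n = y mod n"
proof
  assume e: "U x = U y"
  show "x mod n = y mod n"
  proof (rule ccontr)
    assume "x mod n \<noteq> y mod n"
    moreover have "x mod n < n" "y mod n < n"
      using three_le by auto
    moreover have "U (x mod n) = U (y mod n)"
      using e by (simp add: vertex_mod)
    ultimately show False
      using inj_on_period[of "x mod n" "y mod n"] inj_on_period[of "y mod n" "x mod n"]
      by (metis add.commute linorder_neqE_nat trans_less_add2)
  qed
qed (metis vertex_mod)

definition edge :: "nat \<Rightarrow> complex" where
  "edge k = U (Suc k) - U k"

lemma edge_nonzero: "edge k \<noteq> 0"
  using inj_on_period[of k "Suc k"] three_le by (auto simp: edge_def)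

lemma edge_length_ge: "l \<le> cmod (edge k)"
  unfolding edge_def by (rule side_length_ge)

lemma edge_length_sq_ge: "l\<^sup>2 \<le> (cmod (edge k))\<^sup>2"
  using l_pos edge_length_ge by (simp add: power_mono)

lemma edge_periodic: "edge (k + n) = edge k"
  using periodic[of k] periodic[of "Suc k"] by (simp add: edge_def)

lemma edge_inner_nonneg: "0 \<le> inner (edge k) (edge (Suc k))"
proof -
  have "inner (edge k) (edge (Suc k)) = - inner (U k - U (Suc k)) (U (Suc (Suc k)) - U (Suc k))"
    unfolding edge_def by (simp add: inner_diff_left inner_diff_right)
  then show ?thesis
    using angle_nonacute[of k] by linarith
qed

lemma left_turn: "0 < cross2 (edge k) (edge (Suc k))"
proof -
  have "U (Suc (Suc k)) \<noteq> U k" "U (Suc (Suc k)) \<noteq> U (Suc k)"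
    using inj_on_period[of k "Suc (Suc k)"] inj_on_period[of "Suc k" "Suc (Suc k)"] three_le by auto
  then have "0 < cross2 (U (Suc k) - U k) (U (Suc (Suc k)) - U k)"
    using left_of_edge by blast
  then show ?thesis
    by (simp add: edge_def cross2_Re_Im algebra_simps)
qed

lemma diff_eq_sum_edges: "i \<le> j \<Longrightarrow> U j - U i = (\<Sum>k=i..<j. edge k)"
  by (simp add: edge_def sum_Suc_diff')

lemma two_edge_diagonal_ge: "2 * l\<^sup>2 \<le> (cmod (U (Suc (Suc k)) - U k))\<^sup>2"
proof -
  have "U (Suc (Suc k)) - U k = edge k + edge (Suc k)"
    by (simp add: edge_def)
  then have "(cmod (U (Suc (Suc k)) - U k))\<^sup>2
      = (cmod (edge k))\<^sup>2 + 2 * inner (edge k) (edge (Suc k)) + (cmod (edge (Suc k)))\<^sup>2"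
    by (simp add: power2_norm_eq_inner inner_add_left inner_add_right inner_commute)
  then show ?thesis
    using edge_length_sq_ge[of k] edge_length_sq_ge[of "Suc k"] edge_inner_nonneg[of k] by linarith
qed

lemma obtuse_polygon_shift: "obtuse_polygon n (\<lambda>k. U (k + b)) l"
proof
  fix k i j :: nat
  show "U (k + n + b) = U (k + b)"
    using periodic[of "k + b"] by (simp add: algebra_simps)
  show "i < j \<Longrightarrow> j < i + n \<Longrightarrow> U (i + b) \<noteq> U (j + b)"
    using inj_on_period by simp
  show "U (j + b) \<noteq> U (i + b) \<Longrightarrow> U (j + b) \<noteq> U (Suc i + b) \<Longrightarrow>
      0 < cross2 (U (Suc i + b) - U (i + b)) (U (j + b) - U (i + b))"
    using left_of_edge[of "j + b" "i + b"] by simp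
  show "l \<le> cmod (U (Suc i + b) - U (i + b))"
    using side_length_ge[of "i + b"] by simp
  show "inner (U (i + b) - U (Suc i + b)) (U (Suc (Suc i) + b) - U (Suc i + b)) \<le> 0"
    using angle_nonacute[of "i + b"] by simp
qed (use three_le l_pos in auto)

text \<open>Reflection reverses the orientation, so reading the mirror image backwards
  (vertex \<open>(n - 1) * k \<equiv> -k\<close>) gives a counterclockwise polygon again.\<close>

lemma obtuse_polygon_reflect: "obtuse_polygon n (\<lambda>k. cnj (U ((n - 1) * k))) l"
proof -
  define N where "N k = (n - 1) * k" for k
  have N_Suc: "N (Suc k) = N k + n - 1" for k
    using three_le by (simp add: N_def algebra_simps)
  have U_N_Suc: "U (Suc (N k + n - 1)) = U (N k)" for k
    using periodic[of "N k"] three_le by (simp add: Suc_diff_le)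
  show ?thesis
    unfolding N_def[symmetric]
  proof
    fix k
    have "N (k + n) = N k + (n - 1) * n"
      by (simp add: N_def add_mult_distrib2)
    then show "cnj (U (N (k + n))) = cnj (U (N k))"
      using periodic_mult by simp
  next
    fix i j :: nat
    assume ij: "i < j" "j < i + n"
    show "cnj (U (N i)) \<noteq> cnj (U (N j))"
    proof
      assume "cnj (U (N i)) = cnj (U (N j))"
      then have "N j mod n = N i mod n"
        using vertex_eq_iff by simp
      moreover have "N i \<le> N j" "N j - N i = (n - 1) * (j - i)"
        using ij by (simp_all add: N_def diff_mult_distrib2)
      ultimately have "n dvd (n - 1) * (j - i)"
        by (metis mod_eq_dvd_iff_nat)
      moreover have "n * (j - i) - (n - 1) * (j - i) = j - i"
        using three_le by (simp add: diff_mult_distrib)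
      ultimately have "n dvd (j - i)"
        using dvd_diff_nat[of n "n * (j - i)" "(n - 1) * (j - i)"] by simp
      then show False
        using ij dvd_imp_le[of n "j - i"] by auto
    qed
  next
    fix i j
    assume "cnj (U (N j)) \<noteq> cnj (U (N i))" "cnj (U (N j)) \<noteq> cnj (U (N (Suc i)))"
    then have "U (N j) \<noteq> U (Suc (N i + n - 1))" "U (N j) \<noteq> U (N i + n - 1)"
      unfolding U_N_Suc by (simp_all add: N_Suc)
    then have "0 < cross2 (U (Suc (N i + n - 1)) - U (N i + n - 1)) (U (N j) - U (N i + n - 1))"
      using left_of_edge by blast
    then show "0 < cross2 (cnj (U (N (Suc i))) - cnj (U (N i))) (cnj (U (N j)) - cnj (U (N i)))"
      unfolding N_Suc U_N_Suc by (simp add: cross2_Re_Im algebra_simps)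
  next
    fix i
    have "cmod (cnj (U (N (Suc i))) - cnj (U (N i))) = cmod (U (Suc (N i + n - 1)) - U (N i + n - 1))"
      unfolding N_Suc U_N_Suc by (metis complex_cnj_diff complex_mod_cnj norm_minus_commute)
    then show "l \<le> cmod (cnj (U (N (Suc i))) - cnj (U (N i)))"
      using side_length_ge by simp
  next
    fix i
    obtain q where q: "N i + n - 1 = Suc q"
      using three_le by (intro that[of "N i + n - 2"]) simp
    have "N (Suc (Suc i)) = q + n"
      using q three_le by (simp add: N_Suc)
    then have "U (N (Suc (Suc i))) = U q"
      using periodic by simp
    then have "inner (cnj (U (N i)) - cnj (U (N (Suc i)))) (cnj (U (N (Suc (Suc i)))) - cnj (U (N (Suc i))))
        = inner (U q - U (Suc q)) (U (Suc (Suc q)) - U (Suc q))"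
      using U_N_Suc[of i] unfolding N_Suc q by (simp add: inner_complex_def algebra_simps)
    then show "inner (cnj (U (N i)) - cnj (U (N (Suc i)))) (cnj (U (N (Suc (Suc i)))) - cnj (U (N (Suc i)))) \<le> 0"
      using angle_nonacute by simp
  qed (use three_le l_pos in auto)
qed

lemma obtuse_polygon_reflect_at: "obtuse_polygon n (\<lambda>k. cnj (U ((n - 1) * k + d))) l"
proof -
  interpret W: obtuse_polygon n "\<lambda>k. U (k + d)" l
    by (rule obtuse_polygon_shift)
  show ?thesis
    by (rule W.obtuse_polygon_reflect)
qed

lemma vertex_reflected: "k \<le> d \<Longrightarrow> U ((n - 1) * k + d) = U (d - k)"
  using periodic_mult[of "d - k" k] three_le by (simp add: algebra_simps diff_mult_distrib)

lemma ccw_consecutive: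
  assumes "b < x" "Suc x < b + n"
  shows "0 < cross2 (U x - U b) (U (Suc x) - U b)"
proof -
  have "U b \<noteq> U x" "U b \<noteq> U (Suc x)"
    using inj_on_period[of b x] inj_on_period[of b "Suc x"] assms by auto
  then have "0 < cross2 (U (Suc x) - U x) (U b - U x)"
    using left_of_edge by blast
  then show ?thesis
    by (simp add: cross2_Re_Im algebra_simps)
qed

lemma ccw_first_edge:
  assumes "Suc b < x" "x < b + n"
  shows "0 < cross2 (U (Suc b) - U b) (U x - U b)"
  using left_of_edge inj_on_period[of b x] inj_on_period[of "Suc b" x] assms by auto

lemma ccw_fan:
  assumes "b < j" "j < k" "k < b + n"
  shows "0 < cross2 (U j - U b) (U k - U b)"
proof (cases "j = Suc b")
  case True
  then show ?thesis
    using ccw_first_edge assms by simp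
next
  case False
  then have jb: "Suc b < j"
    using assms by simp
  have "Suc j \<le> k"
    using assms by simp
  then show ?thesis
    using assms(3)
  proof (induction k rule: dec_induct)
    case base
    then show ?case
      using ccw_consecutive assms(1) by simp
  next
    case (step k)
    let ?e = "U (Suc b) - U b"
    show ?case
    proof (rule cross2_pos_trans)
      show "0 < cross2 ?e (U j - U b)" "0 < cross2 ?e (U k - U b)" "0 < cross2 ?e (U (Suc k) - U b)"
        using ccw_first_edge jb step by auto
      show "0 < cross2 (U j - U b) (U k - U b)"
        using step by simp
      show "0 < cross2 (U k - U b) (U (Suc k) - U b)"
        using ccw_consecutive jb step by simp
    qed
  qed
qed

lemma inner_local_min_global:
  assumes "inner w (U (Suc i)) \<le> inner w (U i)" "inner w (U (Suc i)) \<le> inner w (U (Suc (Suc i)))"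
  shows "inner w (U (Suc i)) \<le> inner w (U k)"
proof (cases "U k \<in> {U i, U (Suc i), U (Suc (Suc i))}")
  case False
  define a c x where "a = U i - U (Suc i)" and "c = U (Suc (Suc i)) - U (Suc i)"
    and "x = U k - U (Suc i)"
  text \<open>\<open>x\<close> lies in the cone spanned by \<open>a\<close> and \<open>c\<close>, on both of which \<open>inner w\<close> is nonnegative.\<close>
  have "0 < cross2 c x"
    using left_of_edge[of k "Suc i"] False by (auto simp: c_def x_def)
  moreover have "0 < cross2 x a"
    using left_of_edge[of k i] False by (auto simp: x_def a_def cross2_Re_Im algebra_simps)
  moreover have "0 < cross2 c a"
    using left_turn[of i] by (simp add: edge_def c_def a_def cross2_Re_Im algebra_simps)
  moreover have "0 \<le> inner w a" "0 \<le> inner w c"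
    using assms by (simp_all add: a_def c_def inner_diff_right)
  ultimately have "0 \<le> cross2 c a * inner w x"
    unfolding cross2_cone_inner[of c a w x] by simp
  then have "0 \<le> inner w x"
    using \<open>0 < cross2 c a\<close> by (simp add: zero_le_mult_iff)
  then show ?thesis
    by (simp add: x_def inner_diff_right)
qed (use assms in auto)

lemma height_min_at_ends:
  assumes "0 < c" "c < d" "Suc d < n"
  shows "min (cross2 (U 1 - U 0) (U d - U 0)) (cross2 (U (d - 1) - U 0) (U d - U 0))
           \<le> cross2 (U c - U 0) (U d - U 0)"
proof (rule ccontr)
  define h where "h x = inner (- (\<i> * (U d - U 0))) x" for x
  have h_eq: "cross2 (x - U 0) (U d - U 0) = h x - h (U 0)" for x
    by (simp add: h_def cross2_Re_Im inner_complex_def algebra_simps)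
  assume "\<not> ?thesis"
  then have c1: "h (U c) < h (U 1)" and c2: "h (U c) < h (U (d - 1))"
    unfolding h_eq by auto
  define S where "S = {1..d - 1}"
  have "finite S" "S \<noteq> {}"
    using assms by (auto simp: S_def)
  then obtain m where m: "m \<in> S" and m_min: "\<And>x. x \<in> S \<Longrightarrow> h (U m) \<le> h (U x)"
    using ex_is_arg_min_if_finite[of S "\<lambda>x. h (U x)"] unfolding is_arg_min_linorder by blast
  have "h (U m) \<le> h (U c)"
    using m_min assms by (simp add: S_def)
  then have "m \<noteq> 1" "m \<noteq> d - 1"
    using c1 c2 by auto
  then obtain m' where m': "m = Suc m'" "m' \<in> S" "Suc m \<in> S"
    using m by (cases m) (auto simp: S_def)
  have "h (U m) \<le> h (U (Suc d))"
    unfolding m' by (rule inner_local_min_global[of "- (\<i> * (U d - U 0))", folded h_def])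
      (use m_min m' in auto)
  then have "cross2 (U m - U 0) (U d - U 0) \<le> cross2 (U (Suc d) - U 0) (U d - U 0)"
    unfolding h_eq by simp
  moreover have "0 < cross2 (U m - U 0) (U d - U 0)"
    using ccw_fan[of 0 m d] m assms by (auto simp: S_def)
  moreover have "0 < cross2 (U d - U 0) (U (Suc d) - U 0)"
    using ccw_fan[of 0 d "Suc d"] assms by simp
  ultimately show False
    by (simp add: cross2_Re_Im algebra_simps)
qed

text \<open>Up to the factor \<open>cmod (edge 0)\<close>, \<open>rise k\<close> and \<open>advance k\<close> are the components of \<open>edge k\<close>
  normal and parallel to the first edge.\<close>

abbreviation rise :: "nat \<Rightarrow> real" where
  "rise k \<equiv> cross2 (edge 0) (edge k)"

abbreviation advance :: "nat \<Rightarrow> real" where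
  "advance k \<equiv> inner (edge 0) (edge k)"

lemma rise_first: "rise 0 = 0"
  by (simp add: cross2_Re_Im)

lemma advance_first_pos: "0 < advance 0"
  using edge_nonzero[of 0] by simp

lemma rise_second_pos: "0 < rise 1"
  using left_turn[of 0] by simp

lemma rise_last_neg: "rise (n - 1) < 0"
proof -
  have "0 < cross2 (edge (n - 1)) (edge 0)"
    using left_turn[of "n - 1"] edge_periodic[of 0] three_le by simp
  then show ?thesis
    by (simp add: cross2_Re_Im algebra_simps)
qed

lemma consecutive_rises_not_both_zero: "rise k = 0 \<Longrightarrow> rise (Suc k) \<noteq> 0"
  using norm_sq_mult_cross2[of "edge 0" "edge k" "edge (Suc k)"] left_turn[of k] edge_nonzero[of 0]
  by auto

lemma cross2_first_edge_diagonal: "cross2 (edge 0) (U d - U 0) = (\<Sum>k=0..<d. rise k)"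
  using diff_eq_sum_edges[of 0 d] by (simp add: cross2_sum_right)

lemma cross2_first_edge_diagonal_back:
  assumes "d \<le> n"
  shows "cross2 (edge 0) (U d - U 0) = (\<Sum>k=d..<n. - rise k)"
proof -
  have "(\<Sum>k=d..<n. rise k) = cross2 (edge 0) (U 0 - U d)"
    using diff_eq_sum_edges[OF assms] periodic[of 0] by (simp add: cross2_sum_right)
  then have "(\<Sum>k=d..<n. - rise k) = - cross2 (edge 0) (U 0 - U d)"
    by (simp add: sum_negf)
  also have "\<dots> = cross2 (edge 0) (U d - U 0)"
    by (metis cross2_minus_right minus_diff_eq)
  finally show ?thesis ..
qed

lemma sum_edges_norm_sq_ge:
  assumes "a \<le> b"
    and "\<And>i j. i \<in> {a..<b} \<Longrightarrow> j \<in> {a..<b} \<Longrightarrow> 0 \<le> rise i * rise j \<and> 0 \<le> advance i * advance j"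
  shows "real (b - a) * l\<^sup>2 \<le> (cmod (U b - U a))\<^sup>2"
proof -
  have "real (b - a) * l\<^sup>2 \<le> (\<Sum>k=a..<b. (cmod (edge k))\<^sup>2)"
    using sum_mono[of "{a..<b}" "\<lambda>_. l\<^sup>2"] edge_length_sq_ge by simp
  also have "\<dots> \<le> (cmod (\<Sum>k=a..<b. edge k))\<^sup>2"
  proof (rule norm_sum_sq_ge_sum_norm_sq)
    fix i j
    assume "i \<in> {a..<b}" "j \<in> {a..<b}"
    then have "0 \<le> (cmod (edge 0))\<^sup>2 * inner (edge i) (edge j)"
      using assms(2) unfolding norm_sq_mult_inner by (simp add: add_nonneg_nonneg)
    then show "0 \<le> inner (edge i) (edge j)"
      using edge_nonzero[of 0] by (simp add: zero_le_mult_iff)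
  qed simp
  finally show ?thesis
    using diff_eq_sum_edges assms(1) by simp
qed

lemma short_chain_has_backward_edge:
  assumes "a + 2 \<le> b" "(cmod (U b - U a))\<^sup>2 < 2 * l\<^sup>2"
    and "\<And>i j. i \<in> {a..<b} \<Longrightarrow> j \<in> {a..<b} \<Longrightarrow> 0 \<le> rise i * rise j"
  shows "\<exists>j\<in>{a..<b}. advance j < 0"
proof (rule ccontr)
  assume "\<not> ?thesis"
  then have "\<And>j. j \<in> {a..<b} \<Longrightarrow> 0 \<le> advance j"
    by (meson not_le)
  then have "real (b - a) * l\<^sup>2 \<le> (cmod (U b - U a))\<^sup>2"
    using assms(1,3) by (intro sum_edges_norm_sq_ge) auto
  moreover have "2 * l\<^sup>2 \<le> real (b - a) * l\<^sup>2"
    using assms(1) by (intro mult_right_mono) auto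
  ultimately show False
    using assms(2) by simp
qed

lemma first_backward_edge:
  assumes "2 \<le> d" "(cmod (U d - U 0))\<^sup>2 < 2 * l\<^sup>2" "\<And>k. k < d \<Longrightarrow> 0 \<le> rise k"
  obtains k where "Suc k < d" "0 \<le> advance k" "advance (Suc k) < 0"
proof -
  have "\<exists>k<d. advance k < 0"
    using short_chain_has_backward_edge[of 0 d] assms by auto
  then obtain k where k: "k < d" "advance k < 0" and before: "\<And>j. j < k \<Longrightarrow> 0 \<le> advance j"
    using exists_least_iff[of "\<lambda>k. k < d \<and> advance k < 0"] by (metis less_trans not_le)
  obtain k' where "k = Suc k'"
    using k advance_first_pos by (cases k) auto
  then show ?thesis
    using that[of k'] k before by simp
qed

lemma lower_chain_height:
  assumes d: "2 \<le> d" and short: "(cmod (U d - U 0))\<^sup>2 < 2 * l\<^sup>2"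
    and rises: "\<And>k. k < d \<Longrightarrow> 0 \<le> rise k"
  shows "l * cmod (edge 0) \<le> cross2 (edge 0) (U d - U 0) \<and>
    (cross2 (edge 0) (U d - U 0) = l * cmod (edge 0) \<longrightarrow> d = 3 \<and> antiparallel (edge 0) (edge 2))"
proof -
  obtain k' where "Suc k' < d" "0 \<le> advance k'" "advance (Suc k') < 0"
    using first_backward_edge[OF d short rises] .
  moreover define k where "k = Suc k'"
  ultimately have k: "k < d" "advance k < 0" and k': "k = Suc k'" and "advance k' * advance k \<le> 0"
    by (simp_all add: mult_nonneg_nonpos)
  then have chain: "l * cmod (edge 0) \<le> (\<Sum>j=0..<d. rise j) \<and>
      ((\<Sum>j=0..<d. rise j) = l * cmod (edge 0) \<longrightarrow>
        (\<forall>j\<in>{0..<d} - {k', k}. rise j = 0) \<and>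
        ((rise k' = 0 \<and> advance k = 0) \<or> (rise k = 0 \<and> advance k' = 0)))"
    using chain_cross2_sum_ge[OF edge_nonzero[of 0] l_pos, where a = 0 and b = d and F = edge and k = k'] k k' rises
      edge_length_ge edge_inner_nonneg[of k'] by auto
  show ?thesis
    unfolding cross2_first_edge_diagonal
  proof (rule conjI[OF _ impI])
    show "l * cmod (edge 0) \<le> (\<Sum>j=0..<d. rise j)"
      using chain by blast
  next
    assume "(\<Sum>j=0..<d. rise j) = l * cmod (edge 0)"
    then have rest: "\<And>j. j < d \<Longrightarrow> j \<noteq> k' \<Longrightarrow> j \<noteq> k \<Longrightarrow> rise j = 0"
      and "rise k = 0" "advance k' = 0"
      using chain k by auto
    have "k' \<noteq> 0"
      using \<open>advance k' = 0\<close> advance_first_pos by (metis less_irrefl)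
    moreover have "1 = k' \<or> 1 = k"
      using rest[of 1] rise_second_pos d by fastforce
    ultimately have "k' = 1"
      using k' by auto
    then have "k = 2"
      using k' by simp
    then have "antiparallel (edge 0) (edge 2)"
      using \<open>rise k = 0\<close> k by (simp add: antiparallel_def)
    moreover have "d = 3"
    proof (rule ccontr)
      assume "d \<noteq> 3"
      then have "rise 3 = 0"
        using rest[of 3] k \<open>k = 2\<close> \<open>k' = 1\<close> by simp
      then show False
        using consecutive_rises_not_both_zero[of 2] \<open>rise k = 0\<close> \<open>k = 2\<close> by (simp add: numeral_eq_Suc)
    qed
    ultimately show "d = 3 \<and> antiparallel (edge 0) (edge 2)"
      by simp
  qed
qed

lemma upper_rises_nonpos:
  assumes k: "k < d" "rise k < 0" and j: "d \<le> j" "j < n"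
  shows "rise j \<le> 0"
proof (rule ccontr)
  assume rise_j: "\<not> rise j \<le> 0"
  define h where "h x = inner (\<i> * edge 0) x" for x
  have rise_eq: "rise m = h (U (Suc m)) - h (U m)" for m
    by (simp add: h_def edge_def cross2_Re_Im inner_complex_def algebra_simps)
  have "k \<noteq> 0"
    using k(2) rise_first by (metis less_irrefl)
  define S where "S = {Suc k..j}"
  have "finite S" "S \<noteq> {}"
    using k j by (auto simp: S_def)
  then obtain m where m: "m \<in> S" and m_min: "\<And>x. x \<in> S \<Longrightarrow> h (U m) \<le> h (U x)"
    using ex_is_arg_min_if_finite[of S "\<lambda>x. h (U x)"] unfolding is_arg_min_linorder by blast
  obtain m' where m': "m = Suc m'"
    using m by (cases m) (auto simp: S_def)
  have "h (U (Suc m')) \<le> h (U m')"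
  proof (cases "m = Suc k")
    case True
    then show ?thesis
      using k(2) m' rise_eq[of k] by simp
  next
    case False
    then show ?thesis
      using m m' m_min[of m'] by (simp add: S_def)
  qed
  moreover have "h (U (Suc m')) \<le> h (U (Suc (Suc m')))"
  proof (cases "m = j")
    case True
    then show ?thesis
      using rise_j m' rise_eq[of j] by simp
  next
    case False
    then show ?thesis
      using m m' m_min[of "Suc m"] by (simp add: S_def)
  qed
  ultimately have "h (U m) \<le> h (U 0)"
    unfolding m' h_def by (rule inner_local_min_global)
  moreover have "0 < cross2 (edge 0) (U m - U 0)"
    using ccw_first_edge[of 0 m] m \<open>k \<noteq> 0\<close> j by (auto simp: S_def edge_def)
  ultimately show False
    by (simp add: h_def cross2_Re_Im inner_complex_def algebra_simps)
qed

lemma last_backward_edge: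
  assumes d: "d + 3 \<le> n" and short: "(cmod (U d - U 0))\<^sup>2 < 2 * l\<^sup>2"
    and rises: "\<And>j. d \<le> j \<Longrightarrow> j < n \<Longrightarrow> rise j \<le> 0"
  obtains j where "d \<le> j" "Suc j < n" "advance j < 0" "0 \<le> advance (Suc j)"
proof -
  have "(cmod (U n - U d))\<^sup>2 < 2 * l\<^sup>2"
    using short periodic[of 0] by (simp add: norm_minus_commute)
  then have "\<exists>j\<in>{d..<n}. advance j < 0"
    by (rule short_chain_has_backward_edge[rotated]) (use d rises in \<open>auto intro: mult_nonpos_nonpos\<close>)
  define J where "J = {j. d \<le> j \<and> j < n \<and> advance j < 0}"
  define j where "j = Max J"
  have "finite J" "J \<noteq> {}"
    using \<open>\<exists>j\<in>{d..<n}. advance j < 0\<close> by (auto simp: J_def)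
  then have j: "d \<le> j" "j < n" "advance j < 0" and after: "\<And>i. i \<in> J \<Longrightarrow> i \<le> j"
    using Max_in[of J] Max_ge[of J] by (auto simp: j_def J_def)
  have "0 \<le> advance (n - 1)"
    using edge_inner_nonneg[of "n - 1"] edge_periodic[of 0] three_le by (simp add: inner_commute)
  then have "Suc j < n"
    using j by (metis Suc_lessI diff_Suc_1 not_le)
  then show ?thesis
    using that[of j] after[of "Suc j"] j by (force simp: J_def)
qed

lemma upper_chain_height:
  assumes d: "d + 3 \<le> n" and short: "(cmod (U d - U 0))\<^sup>2 < 2 * l\<^sup>2"
    and rises: "\<And>j. d \<le> j \<Longrightarrow> j < n \<Longrightarrow> rise j \<le> 0"
  shows "l * cmod (edge 0) < cross2 (edge 0) (U d - U 0)"
proof -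
  obtain j where j: "d \<le> j" "advance j < 0" and "Suc j < n" "0 \<le> advance (Suc j)"
    using last_backward_edge[OF d short rises] .
  then have "inner (edge 0) (- edge j) * inner (edge 0) (- edge (Suc j)) \<le> 0"
    using j by (simp add: mult_nonpos_nonneg)
  moreover have "\<And>i. i \<in> {d..<n} \<Longrightarrow> l \<le> cmod (- edge i) \<and> 0 \<le> cross2 (edge 0) (- edge i)"
    using rises edge_length_ge by simp
  moreover have "0 \<le> inner (- edge j) (- edge (Suc j))"
    using edge_inner_nonneg by simp
  ultimately have chain: "l * cmod (edge 0) \<le> (\<Sum>i=d..<n. - rise i) \<and>
      ((\<Sum>i=d..<n. - rise i) = l * cmod (edge 0) \<longrightarrow>
        (\<forall>i\<in>{d..<n} - {j, Suc j}. - rise i = 0) \<and>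
        ((- rise j = 0 \<and> - advance (Suc j) = 0) \<or> (- rise (Suc j) = 0 \<and> - advance j = 0)))"
    using chain_cross2_sum_ge[OF edge_nonzero[of 0] l_pos, where a = d and b = n
        and F = "\<lambda>i. - edge i" and k = j] j \<open>Suc j < n\<close> by simp
  have sum_eq: "(\<Sum>i=d..<n. - rise i) = cross2 (edge 0) (U d - U 0)"
    using cross2_first_edge_diagonal_back[of d] d by simp
  have "cross2 (edge 0) (U d - U 0) \<noteq> l * cmod (edge 0)"
  proof
    assume "cross2 (edge 0) (U d - U 0) = l * cmod (edge 0)"
    then have rest: "\<And>i. d \<le> i \<Longrightarrow> i < n \<Longrightarrow> i \<noteq> j \<Longrightarrow> i \<noteq> Suc j \<Longrightarrow> rise i = 0"
      and "rise j = 0"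
      using chain j unfolding sum_eq by auto
    have "Suc j = n - 1"
    proof (rule ccontr)
      assume "Suc j \<noteq> n - 1"
      then show False
        using rest[of "n - 1"] rise_last_neg j d \<open>Suc j < n\<close> by simp
    qed
    moreover have "j = d"
    proof (rule ccontr)
      assume "j \<noteq> d"
      then obtain i where "j = Suc i" "d \<le> i"
        using j by (intro that[of "j - 1"]) auto
      then have "rise i = 0"
        using rest[of i] j \<open>Suc j < n\<close> by simp
      then show False
        using consecutive_rises_not_both_zero[of i] \<open>rise j = 0\<close> \<open>j = Suc i\<close> by simp
    qed
    ultimately show False
      using d by simp
  qed
  then show ?thesis
    using chain unfolding sum_eq by linarith
qed

text \<open>Once the chain from \<open>U 0\<close> dips below the line of the first edge, the chain from \<open>U d\<close>
  back to \<open>U n = U 0\<close> never rises, and then it carries the estimate.\<close>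

lemma short_diagonal_height:
  assumes "2 \<le> d" "d + 3 \<le> n" "(cmod (U d - U 0))\<^sup>2 < 2 * l\<^sup>2"
  shows "l * cmod (edge 0) \<le> cross2 (edge 0) (U d - U 0) \<and>
    (cross2 (edge 0) (U d - U 0) = l * cmod (edge 0) \<longrightarrow> d = 3 \<and> antiparallel (edge 0) (edge 2))"
proof (cases "\<forall>k<d. 0 \<le> rise k")
  case True
  then show ?thesis
    using lower_chain_height assms by blast
next
  case False
  then obtain k where "k < d" "rise k < 0"
    by (meson not_le)
  then have "l * cmod (edge 0) < cross2 (edge 0) (U d - U 0)"
    using upper_chain_height[OF assms(2,3)] upper_rises_nonpos by blast
  then show ?thesis
    by simp
qed

lemma first_triangle_area_ge:
  assumes "2 \<le> d" "d + 3 \<le> n" "(cmod (U d - U 0))\<^sup>2 < 2 * l\<^sup>2"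
  shows "l\<^sup>2 \<le> cross2 (U 1 - U 0) (U d - U 0) \<and>
    (cross2 (U 1 - U 0) (U d - U 0) = l\<^sup>2 \<longrightarrow> d = 3 \<and> antiparallel (edge 0) (edge 2))"
proof -
  have "l\<^sup>2 \<le> l * cmod (edge 0)"
    using edge_length_ge[of 0] l_pos by (simp add: power2_eq_square)
  moreover have "U 1 - U 0 = edge 0"
    by (simp add: edge_def)
  ultimately show ?thesis
    using short_diagonal_height[OF assms] by auto
qed

lemma triangle_area_ge:
  assumes d: "3 \<le> d" "d + 3 \<le> n" and short: "(cmod (U d - U 0))\<^sup>2 < 2 * l\<^sup>2"
    and c: "0 < c" "c < d"
  shows "l\<^sup>2 \<le> cross2 (U c - U 0) (U d - U 0) \<and>
    (cross2 (U c - U 0) (U d - U 0) = l\<^sup>2 \<longrightarrow> d = 3 \<and> antiparallel (edge 0) (edge 2))"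
proof -
  define H where "H x = cross2 (x - U 0) (U d - U 0)" for x
  text \<open>Read backwards from \<open>U d\<close>, the mirror image turns the last triangle \<open>U 0, U (d - 1), U d\<close>
    into a first triangle.\<close>
  define V where "V k = cnj (U ((n - 1) * k + d))" for k
  interpret V: obtuse_polygon n V l
    unfolding V_def by (rule obtuse_polygon_reflect_at)
  have V: "V k = cnj (U (d - k))" if "k \<le> d" for k
    using vertex_reflected[OF that] by (simp add: V_def)
  have "V d - V 0 = cnj (U 0 - U d)"
    using V[of d] V[of 0] by simp
  then have V_short: "(cmod (V d - V 0))\<^sup>2 < 2 * l\<^sup>2"
    using short by (simp add: norm_minus_commute del: complex_cnj_diff)
  have HV: "cross2 (V 1 - V 0) (V d - V 0) = H (U (d - 1))"
  proof -
    have "V 1 = cnj (U (d - 1))" "V 0 = cnj (U d)" "V d = cnj (U 0)"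
      using V d by auto
    then show ?thesis
      by (simp add: H_def cross2_Re_Im algebra_simps)
  qed
  have antiV: "antiparallel (V.edge 0) (V.edge 2) \<Longrightarrow> antiparallel (edge 0) (edge 2)" if "d = 3"
  proof -
    have "V 0 = cnj (U 3)" "V 1 = cnj (U 2)" "V 2 = cnj (U 1)" "V 3 = cnj (U 0)"
      using V that by auto
    then have "V.edge 0 = - cnj (edge 2)" "V.edge 2 = - cnj (edge 0)"
      unfolding V.edge_def edge_def by (simp_all add: numeral_eq_Suc)
    then show "antiparallel (V.edge 0) (V.edge 2) \<Longrightarrow> antiparallel (edge 0) (edge 2)"
      using antiparallel_neg_cnj[of "edge 2" "edge 0"] antiparallel_commute[of "edge 2" "edge 0"] by simp
  qed
  have "2 \<le> d"
    using d by simp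
  from V.first_triangle_area_ge[OF this d(2) V_short]
  have last: "l\<^sup>2 \<le> H (U (d - 1)) \<and>
      (H (U (d - 1)) = l\<^sup>2 \<longrightarrow> d = 3 \<and> antiparallel (edge 0) (edge 2))"
    unfolding HV using antiV by blast
  have first: "l\<^sup>2 \<le> H (U 1) \<and> (H (U 1) = l\<^sup>2 \<longrightarrow> d = 3 \<and> antiparallel (edge 0) (edge 2))"
    using first_triangle_area_ge[OF _ d(2) short] d by (simp add: H_def)
  have "min (H (U 1)) (H (U (d - 1))) \<le> H (U c)"
    using height_min_at_ends[OF c] d by (simp add: H_def)
  then show ?thesis
    using first last unfolding H_def[symmetric] by (auto simp: min_def split: if_splits)
qed

lemma short_diagonal_skips_two_vertices:
  assumes "2 \<le> d" "d + 2 \<le> n" "(cmod (U d - U 0))\<^sup>2 < 2 * l\<^sup>2"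
  shows "3 \<le> d \<and> d + 3 \<le> n"
proof -
  have "d \<noteq> 2"
    using two_edge_diagonal_ge[of 0] assms(3) by (auto simp: numeral_eq_Suc)
  moreover have "n \<noteq> d + 2"
    using two_edge_diagonal_ge[of d] assms(3) periodic[of 0] by (auto simp: norm_minus_commute)
  ultimately show ?thesis
    using assms(1,2) by linarith
qed

lemma hexagon_antiparallel_pairs_impossible:
  assumes "n = 6" "antiparallel (edge 0) (edge 2)" "antiparallel (edge 3) (edge 5)"
  shows False
proof -
  have "cross2 (edge 0) (edge 3) < 0" "cross2 (edge 3) (edge 6) < 0"
    using assms antiparallel_left_turn left_turn[of 2] left_turn[of 5] by (simp_all add: numeral_eq_Suc)
  moreover have "edge 6 = edge 0"
    using edge_periodic[of 0] assms(1) by simp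
  ultimately show False
    by (simp add: cross2_Re_Im mult.commute)
qed

lemma crossing_short_diagonal_product_gt:
  assumes idx: "0 < c" "c < d" "d < a" "a < n" and short: "(cmod (U d - U 0))\<^sup>2 < 2 * l\<^sup>2"
  shows "2 * l\<^sup>2 < cmod (U a - U c) * cmod (U d - U 0)"
proof -
  have "U n = U 0"
    using periodic[of 0] by simp
  have d3: "3 \<le> d" and dn: "d + 3 \<le> n"
    using short_diagonal_skips_two_vertices[OF _ _ short] idx by auto
  define W where "W k = U (k + d)" for k
  interpret W: obtuse_polygon n W l
    unfolding W_def by (rule obtuse_polygon_shift)
  have W: "W 0 = U d" "W (n - d) = U 0" "W (a - d) = U a"
    using idx \<open>U n = U 0\<close> by (simp_all add: W_def)
  have W_edge: "W.edge k = edge (k + d)" for k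
    by (simp add: W.edge_def edge_def W_def)
  define lower upper where "lower = cross2 (U c - U 0) (U d - U 0)"
    and "upper = cross2 (U a - U d) (U 0 - U d)"
  have low: "l\<^sup>2 \<le> lower \<and> (lower = l\<^sup>2 \<longrightarrow> d = 3 \<and> antiparallel (edge 0) (edge 2))"
    unfolding lower_def by (rule triangle_area_ge[OF d3 dn short idx(1,2)])
  have "(cmod (W (n - d) - W 0))\<^sup>2 < 2 * l\<^sup>2"
    using short W by (simp add: norm_minus_commute)
  from W.triangle_area_ge[of "n - d" "a - d", OF _ _ this]
  have up: "l\<^sup>2 \<le> upper \<and> (upper = l\<^sup>2 \<longrightarrow> n - d = 3 \<and> antiparallel (edge d) (edge (d + 2)))"
    using idx dn d3 W unfolding upper_def W_edge by auto
  have "\<not> (lower = l\<^sup>2 \<and> upper = l\<^sup>2)"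
    using low up hexagon_antiparallel_pairs_impossible by force
  then have "2 * l\<^sup>2 < lower + upper"
    using low up by fastforce
  also have "lower + upper = cross2 (U c - U a) (U d - U 0)"
    by (simp add: lower_def upper_def cross2_Re_Im algebra_simps)
  also have "\<dots> \<le> cmod (U a - U c) * cmod (U d - U 0)"
    using abs_cross2_le[of "U c - U a" "U d - U 0"] by (simp add: norm_minus_commute)
  finally show ?thesis .
qed

lemma side_of_diagonal:
  assumes "i < j" "j < n" "x < n" "x \<noteq> i" "x \<noteq> j"
  shows "cross2 (U j - U i) (U x - U i) \<noteq> 0"
    and "cross2 (U j - U i) (U x - U i) < 0 \<longleftrightarrow> i < x \<and> x < j"
proof -
  consider "i < x" "x < j" | "j < x" | "x < i"
    using assms by linarith
  then have "if i < x \<and> x < j then cross2 (U j - U i) (U x - U i) < 0 else 0 < cross2 (U j - U i) (U x - U i)"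
  proof cases
    case 1
    then show ?thesis
      using ccw_fan[of i x j] assms by (simp add: cross2_Re_Im algebra_simps)
  next
    case 2
    then show ?thesis
      using ccw_fan[of i j x] assms by simp
  next
    case 3
    then show ?thesis
      using ccw_fan[of i j "x + n"] periodic[of x] assms by simp
  qed
  then show "cross2 (U j - U i) (U x - U i) \<noteq> 0"
    and "cross2 (U j - U i) (U x - U i) < 0 \<longleftrightarrow> i < x \<and> x < j"
    by (auto split: if_splits)
qed

lemma crossing_separates:
  assumes ij: "i < j" "j < n" and km: "k < n" "m < n"
    and cross: "open_segment (U i) (U j) \<inter> open_segment (U k) (U m) \<noteq> {}"
    and distinct: "closed_segment (U i) (U j) \<noteq> closed_segment (U k) (U m)"
  shows "(i < k \<and> k < j \<and> (m < i \<or> j < m)) \<or> (i < m \<and> m < j \<and> (k < i \<or> j < k))"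
proof -
  define f where "f x = cross2 (U j - U i) (x - U i)" for x
  have f_comb: "f ((1 - s) *\<^sub>R a + s *\<^sub>R b) = (1 - s) * f a + s * f b" for s a b
    by (simp add: f_def cross2_Re_Im algebra_simps)
  have f_ends: "f (U i) = 0" "f (U j) = 0"
    by (simp_all add: f_def cross2_Re_Im)
  obtain p where "p \<in> open_segment (U i) (U j)" "p \<in> open_segment (U k) (U m)"
    using cross by blast
  then obtain t s where p: "p = (1 - t) *\<^sub>R U i + t *\<^sub>R U j" and s: "0 < s" "s < 1"
    "p = (1 - s) *\<^sub>R U k + s *\<^sub>R U m" and "U k \<noteq> U m"
    unfolding in_segment by blast
  have "f p = 0"
    unfolding p f_comb by (simp add: f_ends)
  then have comb: "(1 - s) * f (U k) + s * f (U m) = 0"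
    unfolding s(3) f_comb .
  have "k \<notin> {i, j} \<or> m \<notin> {i, j}"
    using distinct \<open>U k \<noteq> U m\<close> closed_segment_commute by auto
  then have "f (U k) \<noteq> 0 \<or> f (U m) \<noteq> 0"
    using side_of_diagonal(1) ij km by (auto simp: f_def)
  then have "f (U k) \<noteq> 0" "f (U m) \<noteq> 0" "f (U k) < 0 \<longleftrightarrow> 0 < f (U m)"
    using convex_comb_eq_zero_signs[OF s(1,2) comb] by auto
  then have "k \<notin> {i, j}" "m \<notin> {i, j}"
    using f_ends by auto
  then show ?thesis
    using side_of_diagonal(2)[OF ij, of k] side_of_diagonal(2)[OF ij, of m] km
      \<open>f (U k) < 0 \<longleftrightarrow> 0 < f (U m)\<close> \<open>f (U k) \<noteq> 0\<close> \<open>f (U m) \<noteq> 0\<close>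
    unfolding f_def by (cases "f (U k) < 0") (auto simp: f_def)
qed

lemma separated_product_gt:
  assumes idx: "i < k" "k < j" "j < n" "m < n" "m < i \<or> j < m"
    and short: "(cmod (U j - U i))\<^sup>2 < 2 * l\<^sup>2"
  shows "2 * l\<^sup>2 < cmod (U m - U k) * cmod (U j - U i)"
proof -
  define W where "W x = U (x + i)" for x
  interpret W: obtuse_polygon n W l
    unfolding W_def by (rule obtuse_polygon_shift)
  define a where "a = (if j < m then m - i else m + n - i)"
  have "W a = U m"
    using idx periodic[of m] by (auto simp: W_def a_def)
  moreover have "W 0 = U i" "W (k - i) = U k" "W (j - i) = U j"
    using idx by (simp_all add: W_def)
  moreover have "0 < k - i" "k - i < j - i" "j - i < a" "a < n"
    using idx by (auto simp: a_def)
  ultimately show ?thesis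
    using W.crossing_short_diagonal_product_gt[of "k - i" "j - i" a] short by simp
qed

lemma crossing_product_gt:
  assumes idx: "i < n" "j < n" "k < n" "m < n"
    and cross: "open_segment (U i) (U j) \<inter> open_segment (U k) (U m) \<noteq> {}"
    and distinct: "closed_segment (U i) (U j) \<noteq> closed_segment (U k) (U m)"
    and short: "(cmod (U i - U j))\<^sup>2 < 2 * l\<^sup>2"
  shows "2 * l\<^sup>2 < cmod (U i - U j) * cmod (U k - U m)"
proof -
  define i' j' where "i' = min i j" and "j' = max i j"
  have "i \<noteq> j"
    using cross by auto
  then have ij: "i' < j'" "j' < n"
    using idx by (auto simp: i'_def j'_def)
  have swap: "open_segment (U i') (U j') = open_segment (U i) (U j)"
      "closed_segment (U i') (U j') = closed_segment (U i) (U j)"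
      "cmod (U j' - U i') = cmod (U i - U j)"
    by (auto simp: i'_def j'_def min_def max_def open_segment_commute closed_segment_commute
        norm_minus_commute)
  have short': "(cmod (U j' - U i'))\<^sup>2 < 2 * l\<^sup>2"
    using short swap by simp
  consider "i' < k" "k < j'" "m < i' \<or> j' < m" | "i' < m" "m < j'" "k < i' \<or> j' < k"
    using crossing_separates[OF ij idx(3,4)] cross distinct unfolding swap by blast
  then show ?thesis
  proof cases
    case 1
    then show ?thesis
      using separated_product_gt[of i' k j' m] idx ij short' swap by (simp add: norm_minus_commute mult.commute)
  next
    case 2
    then show ?thesis
      using separated_product_gt[of i' m j' k] idx ij short' swap by (simp add: norm_minus_commute mult.commute)
  qed
qed

lemma crossing_diagonals_product:
  assumes idx: "i < n" "j < n" "k < n" "m < n"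
    and cross: "open_segment (U i) (U j) \<inter> open_segment (U k) (U m) \<noteq> {}"
    and distinct: "closed_segment (U i) (U j) \<noteq> closed_segment (U k) (U m)"
  shows "2 * l\<^sup>2 \<le> cmod (U i - U j) * cmod (U k - U m) \<and>
    (cmod (U i - U j) * cmod (U k - U m) = 2 * l\<^sup>2 \<longleftrightarrow>
      cmod (U i - U j) = sqrt 2 * l \<and> cmod (U k - U m) = sqrt 2 * l)"
proof -
  have sq: "(sqrt 2 * l)\<^sup>2 = 2 * l\<^sup>2"
    by (simp add: power_mult_distrib)
  have "(cmod x)\<^sup>2 < 2 * l\<^sup>2" if "cmod x < sqrt 2 * l" for x
    using that unfolding sq[symmetric] by (simp add: power_strict_mono)
  then show ?thesis
    using mult_ge_sq_of_strict[of "cmod (U i - U j)" "cmod (U k - U m)" "sqrt 2 * l"] l_pos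
      crossing_product_gt[OF idx cross distinct]
      crossing_product_gt[OF idx(3,4,1,2) _ distinct[symmetric]] cross
    unfolding sq by (auto simp: inf_commute mult.commute)
qed

end

lemma inner_nonpos_if_vec_angle_ge:
  assumes "a \<noteq> 0" "b \<noteq> 0" "pi / 2 \<le> vec_angle a b"
  shows "inner a b \<le> 0"
proof (rule ccontr)
  define x where "x = inner a b / (cmod a * cmod b)"
  assume "\<not> inner a b \<le> 0"
  then have "0 < x"
    using assms by (simp add: x_def)
  moreover have "x \<le> 1"
    using Cauchy_Schwarz_ineq2[of a b] assms by (simp add: x_def)
  ultimately have "arccos x < arccos 0"
    by (intro arccos_less_arccos) auto
  then show False
    using assms(3) by (simp add: vec_angle_def x_def)
qed

lemma convex_polygon_vertices_distinct:
  assumes "convex_polygon n v" "a < n" "b < n" "a \<noteq> b"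
  shows "v a \<noteq> v b"
proof
  assume eq: "v a = v b"
  obtain s where n: "3 \<le> n" and conv: "\<And>i j. i < n \<Longrightarrow> j < n \<Longrightarrow> j \<noteq> i \<Longrightarrow> j \<noteq> nxt n i \<Longrightarrow>
      s * cross2 (v (nxt n i) - v i) (v j - v i) > 0"
    using assms(1) unfolding convex_polygon_def by blast
  have "\<exists>c\<in>{0, 1, 2}. c \<noteq> a \<and> c \<noteq> nxt n a"
    by force
  then obtain c where c: "c \<in> {0, 1, 2}" "c \<noteq> a" "c \<noteq> nxt n a"
    by blast
  then have "c < n"
    using n by auto
  then have "s * cross2 (v (nxt n a) - v a) (v c - v a) > 0" "nxt n a < n"
    using conv[of a c] c assms n by (auto simp: nxt_def)
  then show False
    using conv[of a b] eq assms by (cases "b = nxt n a") (auto simp: cross2_Re_Im)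
qed

lemma nxt_mod: "nxt n (i mod n) = Suc i mod n"
  unfolding nxt_def by (simp add: mod_Suc_eq)

lemma prv_Suc_mod:
  assumes "0 < n"
  shows "prv n (Suc i mod n) = i mod n"
proof -
  have "prv n (Suc i mod n) = (Suc i mod n + (n - 1)) mod n"
    unfolding prv_def using assms by simp
  also have "\<dots> = (Suc i + (n - 1)) mod n"
    by (simp add: mod_add_left_eq)
  also have "Suc i + (n - 1) = i + n"
    using assms by simp
  finally show ?thesis
    by simp
qed

lemma shortest_side_le: "i < n \<Longrightarrow> shortest_side n v \<le> dist (v i) (v (nxt n i))"
  unfolding shortest_side_def by (intro Min_le) auto

lemma shortest_side_pos:
  assumes "convex_polygon n v"
  shows "0 < shortest_side n v"
proof -
  have n: "0 < n"
    using assms by (simp add: convex_polygon_def)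
  have "v i \<noteq> v (nxt n i)" if "i < n" for i
  proof (rule convex_polygon_vertices_distinct[OF assms that])
    show "nxt n i < n"
      using n by (simp add: nxt_def)
    show "i \<noteq> nxt n i"
      using that assms by (auto simp: nxt_def convex_polygon_def mod_Suc split: if_splits)
  qed
  then show ?thesis
    using n unfolding shortest_side_def by (subst Min_gr_iff) auto
qed

lemma mod_neq_within_period:
  assumes "i < j" "j < i + n"
  shows "i mod n \<noteq> (j::nat) mod n"
proof
  assume "i mod n = j mod n"
  then have "n dvd j - i"
    using assms by (metis less_imp_le mod_eq_dvd_iff_nat)
  then have "n \<le> j - i"
    by (rule dvd_imp_le) (use assms in simp)
  then show False
    using assms by linarith
qed

lemma convex_polygon_angle_inner_nonpos:
  assumes cp: "convex_polygon n v" and angles: "\<forall>t<n. interior_angle n v t \<ge> pi / 2"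
  shows "inner (v (i mod n) - v (Suc i mod n)) (v (Suc (Suc i) mod n) - v (Suc i mod n)) \<le> 0"
proof -
  define t where "t = Suc i mod n"
  have n: "3 \<le> n"
    using cp by (simp add: convex_polygon_def)
  have t: "t < n" "prv n t = i mod n" "nxt n t = Suc (Suc i) mod n"
    using n prv_Suc_mod[of n i] by (simp_all add: t_def nxt_mod)
  have "i mod n \<noteq> t" "Suc (Suc i) mod n \<noteq> t"
    using mod_neq_within_period[of i "Suc i" n] mod_neq_within_period[of "Suc i" "Suc (Suc i)" n] n
    by (auto simp: t_def)
  then have "v (i mod n) \<noteq> v t" "v (Suc (Suc i) mod n) \<noteq> v t"
    using convex_polygon_vertices_distinct[OF cp] t(1) n by auto
  moreover have "pi / 2 \<le> vec_angle (v (i mod n) - v t) (v (Suc (Suc i) mod n) - v t)"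
    using spec[OF angles, of t] t by (simp add: interior_angle_def)
  ultimately show ?thesis
    unfolding t_def[symmetric] by (intro inner_nonpos_if_vec_angle_ge) auto
qed

lemma convex_polygon_normalise:
  assumes cp: "convex_polygon n v" and angles: "\<forall>t<n. interior_angle n v t \<ge> pi / 2"
  obtains g where "g = id \<or> g = cnj" "obtuse_polygon n (\<lambda>k. g (v (k mod n))) (shortest_side n v)"
proof -
  obtain s where s: "s = 1 \<or> s = -1" and n: "3 \<le> n"
    and conv: "\<And>i j. i < n \<Longrightarrow> j < n \<Longrightarrow> j \<noteq> i \<Longrightarrow> j \<noteq> nxt n i \<Longrightarrow>
      s * cross2 (v (nxt n i) - v i) (v j - v i) > 0"
    using cp unfolding convex_polygon_def by blast
  define g :: "complex \<Rightarrow> complex" where "g = (if s = 1 then id else cnj)"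
  have g_diff: "g a - g b = g (a - b)" for a b
    by (simp add: g_def)
  have g_cross2: "cross2 (g a) (g b) = s * cross2 a b" for a b
    using s by (auto simp: g_def cross2_Re_Im)
  have g_inner: "inner (g a) (g b) = inner a b" for a b
    by (simp add: g_def inner_complex_def)
  have g_norm: "cmod (g a) = cmod a" for a
    by (simp add: g_def)
  define U where "U k = g (v (k mod n))" for k
  have distinct: "i mod n \<noteq> j mod n \<Longrightarrow> U i \<noteq> U j" for i j
    using convex_polygon_vertices_distinct[OF cp, of "i mod n" "j mod n"] n
    by (auto simp: U_def g_def split: if_splits)
  have "obtuse_polygon n U (shortest_side n v)"
  proof
    fix i j k :: nat
    show "U (k + n) = U k"
      by (simp add: U_def)
    show "U i \<noteq> U j" if "i < j" "j < i + n"
      using distinct mod_neq_within_period that by blast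
    show "0 < cross2 (U (Suc i) - U i) (U j - U i)" if "U j \<noteq> U i" "U j \<noteq> U (Suc i)"
    proof -
      have "j mod n \<noteq> i mod n" "j mod n \<noteq> nxt n (i mod n)"
        using that by (auto simp: U_def nxt_mod)
      then have "0 < s * cross2 (v (Suc i mod n) - v (i mod n)) (v (j mod n) - v (i mod n))"
        using conv[of "i mod n" "j mod n"] n by (simp add: nxt_mod)
      moreover have "s * s = 1"
        using s by auto
      ultimately show ?thesis
        by (simp add: U_def g_diff g_cross2 mult.assoc[symmetric])
    qed
    show "shortest_side n v \<le> cmod (U (Suc i) - U i)"
      using shortest_side_le[of "i mod n" n v] n
      by (simp add: U_def nxt_mod g_diff g_norm dist_norm norm_minus_commute)
    show "inner (U i - U (Suc i)) (U (Suc (Suc i)) - U (Suc i)) \<le> 0"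
      using convex_polygon_angle_inner_nonpos[OF cp angles, of i] by (simp add: U_def g_diff g_inner)
  qed (use n shortest_side_pos[OF cp] in auto)
  moreover have "g = id \<or> g = cnj"
    by (simp add: g_def)
  ultimately show ?thesis
    using that unfolding U_def[abs_def] by blast
qed

lemma id_or_cnj_isometry:
  assumes "g = id \<or> g = cnj"
  shows "linear g" "inj g" "dist (g a) (g b) = dist a b"
  using assms by (auto simp: linear_id linear_cnj inj_on_def dist_norm
      simp flip: complex_cnj_diff)

theorem mainTheorem12:
  fixes n :: nat and v :: "nat \<Rightarrow> complex" and i j k m :: nat
  assumes "convex_polygon n v"
    and "\<forall>t<n. interior_angle n v t \<ge> pi / 2"
    and "is_diagonal n i j" and "is_diagonal n k m"
    and "closed_segment (v i) (v j) \<noteq> closed_segment (v k) (v m)"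
    and "open_segment (v i) (v j) \<inter> open_segment (v k) (v m) \<noteq> {}"
  shows "dist (v i) (v j) * dist (v k) (v m) \<ge> 2 * (shortest_side n v)\<^sup>2
    \<and> (dist (v i) (v j) * dist (v k) (v m) = 2 * (shortest_side n v)\<^sup>2 \<longleftrightarrow>
         dist (v i) (v j) = sqrt 2 * shortest_side n v \<and>
         dist (v k) (v m) = sqrt 2 * shortest_side n v)"
proof -
  obtain g where g: "g = id \<or> g = cnj"
    and P: "obtuse_polygon n (\<lambda>k. g (v (k mod n))) (shortest_side n v)"
    using convex_polygon_normalise[OF assms(1,2)] .
  interpret P: obtuse_polygon n "\<lambda>k. g (v (k mod n))" "shortest_side n v"
    by (rule P)
  have idx: "i < n" "j < n" "k < n" "m < n"
    using assms(3,4) by (auto simp: is_diagonal_def)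
  note iso = id_or_cnj_isometry[OF g]
  have "open_segment (g (v i)) (g (v j)) \<inter> open_segment (g (v k)) (g (v m)) \<noteq> {}"
    using assms(6) by (simp add: open_segment_linear_image[OF iso(1,2)] image_Int[OF iso(2), symmetric])
  moreover have "closed_segment (g (v i)) (g (v j)) \<noteq> closed_segment (g (v k)) (g (v m))"
    using assms(5) by (simp add: closed_segment_linear_image[OF iso(1)] inj_image_eq_iff[OF iso(2)])
  ultimately show ?thesis
    using P.crossing_diagonals_product[OF idx] idx iso(3) by (simp add: dist_norm)
qed

end
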